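(* Let $\phi:R_1\to R_2^\varepsilon$ and $\psi:R_2\to R_1^\varepsilon$ define an $\varepsilon$-interleaving between Reeb graphs $R_1,R_2$. Let $v$ be a split node or a maximum of $R_1$, let $v'=s(v)\in R_1^\varepsilon$, and let $z$ be a split node or a maximum of $R_2^\varepsilon$. Let $M^-_\varepsilon(z)\subset R_2^\varepsilon$ be the set of points $x$ connected to $z$ by a monotone path $Q_x$ of height at most $2\varepsilon$ with $f_2^\varepsilon(q)\le f_2^\varepsilon(z)$ for all $q\in Q_x$. If $\phi(v)\in M^-_\varepsilon(z)$, then $\phi^\varepsilon(v')\in P^\varepsilon(z)\subset R_2^{2\varepsilon}$. Symmetrically, if $v$ is a join node or minimum of $R_1$, $z$ a join node or minimum of $R_2^\varepsilon$, $M^+_\varepsilon(z)$ the set of points connected to $z$ by a monotone path of height at most $2\varepsilon$ lying entirely at or above $f_2^\varepsilon(z)$, and $\phi(v)\in M^+_\varepsilon(z)$, then $\phi^\varepsilon(s(v))\in P^\varepsilon(z)$.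
   Context: A Reeb graph $R=(G,f)$ is a finite multigraph $G$ (identified with its geometric realization) with a continuous $f$ strictly monotone on each edge and injective on nodes. Split node: up-degree $>1$, down-degree $1$; join node: up-degree $1$, down-degree $>1$; maximum: up-degree $0$, down-degree $1$; minimum: up-degree $1$, down-degree $0$ (degenerate nodes are treated as superpositions of such nodes joined by zero-length edges). A morphism is a continuous function-preserving map. The height of a path is the difference between the maximum and minimum of $f$ on it; a path is monotone if $f$ is monotone along it. For $\varepsilon\ge0$, $\mathcal T^\varepsilon(R)=G\times[-\varepsilon,\varepsilon]$ with $F^\varepsilon(x,t)=f(x)+t$; $R^\varepsilon$ is the Reeb graph of $(\mathcal T^\varepsilon(R),F^\varepsilon)$ with quotient map $\pi$ and function $f^\varepsilon$; $(R^\varepsilon)^\delta$ is identified with $R^{\varepsilon+\delta}$. The shift is $\eta(x)=\pi(x,0)$, and $\eta^{2\varepsilon}:R\to R^{2\varepsilon}$ the $2\varepsilon$-shift. For a morphism $\phi:R_1\to R_2^\varepsilon$, $\phi^\delta:R_1^\delta\to R_2^{\varepsilon+\delta}$ is induced by $(x,t)\mapsto(\phi(x),t)$ on thickenings. An $\varepsilon$-interleaving is a pair $\phi:R_1\to R_2^\varepsilon$, $\psi:R_2\to R_1^\varepsilon$ with $\phi^\varepsilon\circ\psi=\eta_2^{2\varepsilon}$, $\psi^\varepsilon\circ\phi=\eta_1^{2\varepsilon}$. For $x\in R$, $P^\varepsilon(x)=\pi(\{x\}\times[-\varepsilon,\varepsilon])\subset R^\varepsilon$. For a maximum or split node $v$,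 $s(v)=\pi(v,\varepsilon)$; for a minimum or join node, $s(v)=\pi(v,-\varepsilon)$. *)

theory Defs
  imports "HOL-Analysis.Analysis"
begin

definition qtop :: "'a topology \<Rightarrow> ('a \<Rightarrow> 'b) \<Rightarrow> 'b topology" where
  "qtop X p = topology (\<lambda>U. U \<subseteq> p ` topspace X \<and> openin X {x \<in> topspace X. p x \<in> U})"

lemma istopology_qtop:
  "istopology (\<lambda>U. U \<subseteq> p ` topspace X \<and> openin X {x \<in> topspace X. p x \<in> U})"
proof -
  have 1: "{x \<in> topspace X. p x \<in> S \<inter> T} = {x \<in> topspace X. p x \<in> S} \<inter> {x \<in> topspace X. p x \<in> T}" for S T
    by auto
  have 2: "{x \<in> topspace X. p x \<in> \<Union>K} = \<Union>((\<lambda>U. {x \<in> topspace X. p x \<in> U}) ` K)" for K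
    by auto
  show ?thesis
    unfolding istopology_def 1 2 by auto
qed

text \<open>An interior
point of an edge is identified by its function value.\<close>

datatype rpt = Nd nat | Ed nat real

definition mgraph :: "nat set \<Rightarrow> nat set \<Rightarrow> (nat \<Rightarrow> nat) \<Rightarrow> (nat \<Rightarrow> nat) \<Rightarrow> (nat \<Rightarrow> real) \<Rightarrow> bool" where
  "mgraph V E lo hi fv \<longleftrightarrow> finite V \<and> finite E \<and> inj_on fv V \<and>
     (\<forall>e\<in>E. lo e \<in> V \<and> hi e \<in> V \<and> fv (lo e) < fv (hi e))"

definition rpoints :: "nat set \<Rightarrow> nat set \<Rightarrow> (nat \<Rightarrow> nat) \<Rightarrow> (nat \<Rightarrow> nat) \<Rightarrow> (nat \<Rightarrow> real) \<Rightarrow> rpt set" where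
  "rpoints V E lo hi fv = Nd ` V \<union> {Ed e h | e h. e \<in> E \<and> fv (lo e) < h \<and> h < fv (hi e)}"

definition remb :: "(nat \<Rightarrow> nat) \<Rightarrow> (nat \<Rightarrow> nat) \<Rightarrow> (nat \<Rightarrow> real) \<Rightarrow> nat \<Rightarrow> real \<Rightarrow> rpt" where
  "remb lo hi fv e h = (if h = fv (lo e) then Nd (lo e) else if h = fv (hi e) then Nd (hi e) else Ed e h)"

text \<open>Topology of the geometric realization: a set is open iff its preimage in every
closed edge interval is open (the usual CW/quotient topology).\<close>

definition rtop :: "nat set \<Rightarrow> nat set \<Rightarrow> (nat \<Rightarrow> nat) \<Rightarrow> (nat \<Rightarrow> nat) \<Rightarrow> (nat \<Rightarrow> real) \<Rightarrow> rpt topology" where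
  "rtop V E lo hi fv = topology (\<lambda>U. U \<subseteq> rpoints V E lo hi fv \<and>
     (\<forall>e\<in>E. openin (top_of_set {fv (lo e)..fv (hi e)})
                 {h \<in> {fv (lo e)..fv (hi e)}. remb lo hi fv e h \<in> U}))"

fun rfun :: "(nat \<Rightarrow> real) \<Rightarrow> rpt \<Rightarrow> real" where
  "rfun fv (Nd v) = fv v"
| "rfun fv (Ed e h) = h"

definition is_reeb_graph :: "'a topology \<Rightarrow> ('a \<Rightarrow> real) \<Rightarrow> bool" where
  "is_reeb_graph X f \<longleftrightarrow> (\<exists>V E lo hi fv h. mgraph V E lo hi fv \<and>
      homeomorphic_map (rtop V E lo hi fv) X h \<and>
      (\<forall>p\<in>rpoints V E lo hi fv. f (h p) = rfun fv p))"

definition reeb_cls :: "'a topology \<Rightarrow> ('a \<Rightarrow> real) \<Rightarrow> 'a \<Rightarrow> 'a set" where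
  "reeb_cls T F p = connected_component_of_set (subtopology T {q \<in> topspace T. F q = F p}) p"

definition reeb_top :: "'a topology \<Rightarrow> ('a \<Rightarrow> real) \<Rightarrow> 'a set topology" where
  "reeb_top T F = qtop T (reeb_cls T F)"

definition reeb_fun :: "('a \<Rightarrow> real) \<Rightarrow> 'a set \<Rightarrow> real" where
  "reeb_fun F c = F (SOME p. p \<in> c)"

definition thick_top :: "'a topology \<Rightarrow> real \<Rightarrow> ('a \<times> real) topology" where
  "thick_top X \<epsilon> = prod_topology X (top_of_set {-\<epsilon>..\<epsilon>})"

definition thick_fun :: "('a \<Rightarrow> real) \<Rightarrow> 'a \<times> real \<Rightarrow> real" where
  "thick_fun f = (\<lambda>(x, t). f x + t)"

definition sm_top :: "'a topology \<Rightarrow> ('a \<Rightarrow> real) \<Rightarrow> real \<Rightarrow> ('a \<times> real) set topology" where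
  "sm_top X f \<epsilon> = reeb_top (thick_top X \<epsilon>) (thick_fun f)"

definition sm_fun :: "('a \<Rightarrow> real) \<Rightarrow> ('a \<times> real) set \<Rightarrow> real" where
  "sm_fun f = reeb_fun (thick_fun f)"

definition sm_pi :: "'a topology \<Rightarrow> ('a \<Rightarrow> real) \<Rightarrow> real \<Rightarrow> 'a \<times> real \<Rightarrow> ('a \<times> real) set" where
  "sm_pi X f \<epsilon> = reeb_cls (thick_top X \<epsilon>) (thick_fun f)"

definition reeb_morphism :: "'a topology \<Rightarrow> ('a \<Rightarrow> real) \<Rightarrow> 'b topology \<Rightarrow> ('b \<Rightarrow> real) \<Rightarrow> ('a \<Rightarrow> 'b) \<Rightarrow> bool" where
  "reeb_morphism X1 f1 X2 f2 g \<longleftrightarrow> continuous_map X1 X2 g \<and> (\<forall>x\<in>topspace X1. f2 (g x) = f1 x)"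

text \<open>For phi : R_1 -> R_2^eps, phi^delta : R_1^delta -> R_2^(eps+delta), induced by
(x,t) |-> (phi x, t) followed by the identification (R_2^eps)^delta = R_2^(eps+delta),
pi_delta(pi_eps(y,s), t) |-> pi_(eps+delta)(y, s+t).\<close>

definition sm_map :: "'b topology \<Rightarrow> ('b \<Rightarrow> real) \<Rightarrow> real \<Rightarrow> real \<Rightarrow> ('a \<Rightarrow> ('b \<times> real) set)
    \<Rightarrow> ('a \<times> real) set \<Rightarrow> ('b \<times> real) set" where
  "sm_map X2 f2 \<epsilon> \<delta> \<phi> c =
     (let (x, t) = (SOME xt. xt \<in> c); (y, s) = (SOME ys. ys \<in> \<phi> x)
      in sm_pi X2 f2 (\<epsilon> + \<delta>) (y, s + t))"

definition interleaving ::
  "'a topology \<Rightarrow> ('a \<Rightarrow> real) \<Rightarrow> 'b topology \<Rightarrow> ('b \<Rightarrow> real) \<Rightarrow> real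
    \<Rightarrow> ('a \<Rightarrow> ('b \<times> real) set) \<Rightarrow> ('b \<Rightarrow> ('a \<times> real) set) \<Rightarrow> bool" where
  "interleaving X1 f1 X2 f2 \<epsilon> \<phi> \<psi> \<longleftrightarrow>
     reeb_morphism X1 f1 (sm_top X2 f2 \<epsilon>) (sm_fun f2) \<phi> \<and>
     reeb_morphism X2 f2 (sm_top X1 f1 \<epsilon>) (sm_fun f1) \<psi> \<and>
     (\<forall>y\<in>topspace X2. sm_map X2 f2 \<epsilon> \<epsilon> \<phi> (\<psi> y) = sm_pi X2 f2 (2*\<epsilon>) (y, 0)) \<and>
     (\<forall>x\<in>topspace X1. sm_map X1 f1 \<epsilon> \<epsilon> \<psi> (\<phi> x) = sm_pi X1 f1 (2*\<epsilon>) (x, 0))"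

definition up_star :: "'a topology \<Rightarrow> ('a \<Rightarrow> real) \<Rightarrow> 'a \<Rightarrow> real \<Rightarrow> 'a set" where
  "up_star X f x \<delta> = connected_component_of_set
     (subtopology X {y \<in> topspace X. f x \<le> f y \<and> f y < f x + \<delta>}) x"

definition down_star :: "'a topology \<Rightarrow> ('a \<Rightarrow> real) \<Rightarrow> 'a \<Rightarrow> real \<Rightarrow> 'a set" where
  "down_star X f x \<delta> = connected_component_of_set
     (subtopology X {y \<in> topspace X. f x - \<delta> < f y \<and> f y \<le> f x}) x"

definition updeg :: "'a topology \<Rightarrow> ('a \<Rightarrow> real) \<Rightarrow> 'a \<Rightarrow> nat" where
  "updeg X f x = (THE n. \<forall>\<^sub>F \<delta> in at_right 0.
      card (connected_components_of (subtopology X (up_star X f x \<delta> - {x}))) = n)"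

definition downdeg :: "'a topology \<Rightarrow> ('a \<Rightarrow> real) \<Rightarrow> 'a \<Rightarrow> nat" where
  "downdeg X f x = (THE n. \<forall>\<^sub>F \<delta> in at_right 0.
      card (connected_components_of (subtopology X (down_star X f x \<delta> - {x}))) = n)"

text \<open>Degenerate nodes are superpositions of non-degenerate ones; so a point has a
split-or-maximum part iff its up-degree is not 1, and a join-or-minimum part iff its
down-degree is not 1.\<close>

definition split_or_max :: "'a topology \<Rightarrow> ('a \<Rightarrow> real) \<Rightarrow> 'a \<Rightarrow> bool" where
  "split_or_max X f v \<longleftrightarrow> v \<in> topspace X \<and> updeg X f v \<noteq> 1"

definition join_or_min :: "'a topology \<Rightarrow> ('a \<Rightarrow> real) \<Rightarrow> 'a \<Rightarrow> bool" where
  "join_or_min X f v \<longleftrightarrow> v \<in> topspace X \<and> downdeg X f v \<noteq> 1"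

definition path_height :: "('a \<Rightarrow> real) \<Rightarrow> (real \<Rightarrow> 'a) \<Rightarrow> real" where
  "path_height f g = (SUP t\<in>{0..1}. f (g t)) - (INF t\<in>{0..1}. f (g t))"

definition monotone_path :: "'a topology \<Rightarrow> ('a \<Rightarrow> real) \<Rightarrow> (real \<Rightarrow> 'a) \<Rightarrow> bool" where
  "monotone_path X f g \<longleftrightarrow> pathin X g \<and>
     (mono_on {0..1} (f \<circ> g) \<or> antimono_on {0..1} (f \<circ> g))"

definition Mminus :: "'a topology \<Rightarrow> ('a \<Rightarrow> real) \<Rightarrow> real \<Rightarrow> 'a \<Rightarrow> 'a set" where
  "Mminus X f \<epsilon> z = {x. \<exists>g. monotone_path X f g \<and> g 0 = x \<and> g 1 = z \<and>
       path_height f g \<le> 2*\<epsilon> \<and> (\<forall>t\<in>{0..1}. f (g t) \<le> f z)}"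

definition Mplus :: "'a topology \<Rightarrow> ('a \<Rightarrow> real) \<Rightarrow> real \<Rightarrow> 'a \<Rightarrow> 'a set" where
  "Mplus X f \<epsilon> z = {x. \<exists>g. monotone_path X f g \<and> g 0 = x \<and> g 1 = z \<and>
       path_height f g \<le> 2*\<epsilon> \<and> (\<forall>t\<in>{0..1}. f z \<le> f (g t))}"

text \<open>For z in R_2^eps, P^eps(z) = pi({z} x [-eps,eps]) in (R_2^eps)^eps = R_2^(2 eps).\<close>

definition Pset :: "'b topology \<Rightarrow> ('b \<Rightarrow> real) \<Rightarrow> real \<Rightarrow> ('b \<times> real) set \<Rightarrow> ('b \<times> real) set set" where
  "Pset X2 f2 \<epsilon> z = {sm_pi X2 f2 (2*\<epsilon>) (y, s + t) | y s t. (y, s) \<in> z \<and> t \<in> {-\<epsilon>..\<epsilon>}}"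

definition s_up :: "'a topology \<Rightarrow> ('a \<Rightarrow> real) \<Rightarrow> real \<Rightarrow> 'a \<Rightarrow> ('a \<times> real) set" where
  "s_up X f \<epsilon> v = sm_pi X f \<epsilon> (v, \<epsilon>)"

definition s_down :: "'a topology \<Rightarrow> ('a \<Rightarrow> real) \<Rightarrow> real \<Rightarrow> 'a \<Rightarrow> ('a \<times> real) set" where
  "s_down X f \<epsilon> v = sm_pi X f \<epsilon> (v, -\<epsilon>)"

end

theory Submission
  imports Defs
begin

text \<open>The class of (v, \<epsilon>) in R_1^\<epsilon> is connected, so its image under \<phi>, together with the
monotone path from \<phi> v to z, is a connected subset A of R_2^\<epsilon> on which f_2^\<epsilon> stays
within \<epsilon> of the level c = f_1 v + \<epsilon>.  The quotient map of a compact Hausdorff space onto its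
Reeb graph is closed with connected fibres, so the preimage of A in the thickening is
connected; sliding it vertically to level c inside the 2\<epsilon>-thickening therefore lands in a
single component of that level set.  This identifies \<phi>^\<epsilon>(s v) with a point of P^\<epsilon>(z).
The join/minimum case is symmetric, with c = f_1 v - \<epsilon>.\<close>

section \<open>Reeb quotients of compact Hausdorff spaces\<close>

lemma openin_qtop:
  "openin (qtop X p) U \<longleftrightarrow> U \<subseteq> p ` topspace X \<and> openin X {x \<in> topspace X. p x \<in> U}"
  unfolding qtop_def by (simp add: topology_inverse'[OF istopology_qtop])

lemma quotient_map_qtop: "quotient_map X (qtop X p) p"
proof -
  have "{x \<in> topspace X. p x \<in> p ` topspace X} = topspace X"
    by auto
  then have "openin (qtop X p) (p ` topspace X)"
    by (simp add: openin_qtop)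
  then have "topspace (qtop X p) = p ` topspace X"
    by (metis openin_qtop openin_subset openin_topspace subset_antisym)
  then show ?thesis
    unfolding quotient_map_def by (auto simp: openin_qtop)
qed

lemma mem_reeb_cls_self: "p \<in> topspace T \<Longrightarrow> p \<in> reeb_cls T F p"
  unfolding reeb_cls_def by (simp add: connected_component_of_refl)

lemma reeb_cls_subset_level: "reeb_cls T F p \<subseteq> {q \<in> topspace T. F q = F p}"
  unfolding reeb_cls_def
  using connected_component_of_subset_topspace[of "subtopology T {q \<in> topspace T. F q = F p}" p]
  by simp

lemma connectedin_reeb_cls: "connectedin T (reeb_cls T F p)"
  unfolding reeb_cls_def
  by (rule connectedin_subtopology[THEN iffD1, THEN conjunct1, OF connectedin_connected_component_of])

lemma reeb_cls_eq:
  assumes "q \<in> reeb_cls T F p"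
  shows "reeb_cls T F q = reeb_cls T F p"
proof -
  have "F q = F p"
    using assms reeb_cls_subset_level by fastforce
  then have "{r \<in> topspace T. F r = F q} = {r \<in> topspace T. F r = F p}"
    by simp
  moreover have "connected_component_of (subtopology T {r \<in> topspace T. F r = F p}) p q"
    using assms unfolding reeb_cls_def by simp
  then have "connected_component_of (subtopology T {r \<in> topspace T. F r = F p}) p =
      connected_component_of (subtopology T {r \<in> topspace T. F r = F p}) q"
    by (simp add: connected_component_of_equiv)
  ultimately show ?thesis
    unfolding reeb_cls_def by simp
qed

lemma reeb_cls_maximal:
  "\<lbrakk>connectedin T S; S \<subseteq> {q \<in> topspace T. F q = F p}; p \<in> S\<rbrakk> \<Longrightarrow> S \<subseteq> reeb_cls T F p"
  unfolding reeb_cls_def by (simp add: connected_component_of_maximal connectedin_subtopology)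

lemma reeb_cls_fibre:
  assumes "p \<in> topspace T"
  shows "{q \<in> topspace T. reeb_cls T F q = reeb_cls T F p} = reeb_cls T F p"
proof (intro equalityI subsetI)
  fix q assume "q \<in> {q \<in> topspace T. reeb_cls T F q = reeb_cls T F p}"
  then show "q \<in> reeb_cls T F p"
    using mem_reeb_cls_self[of q T F] by auto
next
  fix q assume "q \<in> reeb_cls T F p"
  then show "q \<in> {q \<in> topspace T. reeb_cls T F q = reeb_cls T F p}"
    using reeb_cls_eq reeb_cls_subset_level by fastforce
qed

lemma quotient_map_reeb_cls: "quotient_map T (reeb_top T F) (reeb_cls T F)"
  unfolding reeb_top_def by (rule quotient_map_qtop)

lemma topspace_reeb_top: "topspace (reeb_top T F) = reeb_cls T F ` topspace T"
  using quotient_map_reeb_cls[of T F] unfolding quotient_map_def by simp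

lemma monotone_map_reeb_cls: "monotone_map T (reeb_top T F) (reeb_cls T F)"
  unfolding monotone_map_def topspace_reeb_top
  by (simp add: reeb_cls_fibre connectedin_reeb_cls)

lemma reeb_cls_of_mem:
  assumes "a \<in> topspace (reeb_top T F)" and "p \<in> a"
  shows "p \<in> topspace T" "reeb_cls T F p = a" "reeb_fun F a = F p"
proof -
  obtain r where r: "r \<in> topspace T" "a = reeb_cls T F r"
    using assms(1) unfolding topspace_reeb_top by auto
  then show "p \<in> topspace T" "reeb_cls T F p = a"
    using assms(2) reeb_cls_eq reeb_cls_subset_level by fastforce+
  have "F q = F r" if "q \<in> a" for q
    using that r(2) reeb_cls_subset_level by fastforce
  then show "reeb_fun F a = F p"
    unfolding reeb_fun_def by (metis assms(2) someI)
qed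

lemma level_set_neighbourhood:
  assumes "compact_space T" and F: "continuous_map T euclideanreal F"
    and W: "openin T W" and sub: "{x \<in> topspace T. F x = a} \<subseteq> W"
  obtains \<delta> where "\<delta> > 0" "{x \<in> topspace T. \<bar>F x - a\<bar> < \<delta>} \<subseteq> W"
proof -
  have "closedin T (topspace T - W)"
    using W by (simp add: closedin_diff)
  then have "compactin T (topspace T - W)"
    by (rule closedin_compact_space[OF assms(1)])
  then have "compactin euclideanreal (F ` (topspace T - W))"
    by (rule image_compactin[OF _ F])
  then have "closed (F ` (topspace T - W))"
    by (simp add: compact_imp_closed)
  moreover have "a \<notin> F ` (topspace T - W)"
    using sub by auto
  ultimately obtain \<delta> where \<delta>: "\<delta> > 0" "\<forall>y \<in> F ` (topspace T - W). \<delta> \<le> dist a y"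
    using separate_point_closed by metis
  have "x \<in> W" if "x \<in> topspace T" "\<bar>F x - a\<bar> < \<delta>" for x
    using that \<delta>(2) by (force simp: dist_real_def)
  with \<delta>(1) show thesis
    using that by blast
qed

text \<open>In a compact Hausdorff space connected components coincide with quasi-components.\<close>

lemma connected_component_clopen_separation:
  assumes "compact_space X" "Hausdorff_space X" "C \<in> connected_components_of X"
    and "closedin X K" "disjnt C K"
  obtains W1 W2 where "closedin X W1" "closedin X W2" "W1 \<union> W2 = topspace X" "disjnt W1 W2"
    "C \<subseteq> W1" "K \<subseteq> W2"
proof -
  have "C \<in> quasi_components_of X"
    using quasi_eq_connected_components_of assms(1-3) by auto
  then have "separated_between X C K"
    using separated_between_quasi_component_compact closedin_compact_space[OF assms(1,4)] assms(5)
    by blast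
  then obtain W1 W2 where W: "openin X W1" "openin X W2" "W1 \<union> W2 = topspace X" "disjnt W1 W2"
      "C \<subseteq> W1" "K \<subseteq> W2"
    unfolding separated_between_def by metis
  moreover have "W1 = topspace X - W2" "W2 = topspace X - W1"
    using W(3,4) by (auto simp: disjnt_def)
  ultimately have "closedin X W1" "closedin X W2"
    by (metis closedin_diff closedin_topspace)+
  then show thesis
    using that W(3-6) by blast
qed

lemma reeb_cls_separating_opens:
  assumes cs: "compact_space T" and hs: "Hausdorff_space T"
    and F: "continuous_map T euclideanreal F"
    and p: "p \<in> topspace T" and U: "openin T U" and CU: "reeb_cls T F p \<subseteq> U"
  obtains O1 O2 where "openin T O1" "openin T O2" "disjnt O1 O2"
    "reeb_cls T F p \<subseteq> O1" "O1 \<subseteq> U" "{q \<in> topspace T. F q = F p} \<subseteq> O1 \<union> O2"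
proof -
  define L where "L = {q \<in> topspace T. F q = F p}"
  define LT where "LT = subtopology T L"
  have "closedin T L"
    using closedin_continuous_map_preimage[OF F, of "{F p}"] by (simp add: L_def)
  then have LT: "compact_space LT" "Hausdorff_space LT" "topspace LT = L"
    using closedin_compact_space[OF cs] compact_space_subtopology Hausdorff_space_subtopology[OF hs]
    by (auto simp: LT_def L_def)
  have C: "reeb_cls T F p \<in> connected_components_of LT"
    using p unfolding connected_components_of_def reeb_cls_def LT_def L_def by auto
  have "openin LT (U \<inter> L)"
    unfolding LT_def openin_subtopology using U by blast
  then have "closedin LT (topspace LT - (U \<inter> L))"
    by (rule closedin_diff[OF closedin_topspace])
  moreover have "topspace LT - (U \<inter> L) = L - U"
    using LT(3) by auto
  ultimately have K: "closedin LT (L - U)"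
    by simp
  have "disjnt (reeb_cls T F p) (L - U)"
    using CU by (auto simp: disjnt_def)
  then obtain W1 W2 where W: "closedin LT W1" "closedin LT W2" "W1 \<union> W2 = L" "disjnt W1 W2"
      "reeb_cls T F p \<subseteq> W1" "L - U \<subseteq> W2"
    by (rule connected_component_clopen_separation[OF LT(1,2) C K, unfolded LT(3)])
  then have "compactin T W1" "compactin T W2"
    using \<open>closedin T L\<close> closedin_trans_full closedin_compact_space[OF cs] unfolding LT_def by metis+
  then obtain O1 O2 where O: "openin T O1" "openin T O2" "W1 \<subseteq> O1" "W2 \<subseteq> O2" "disjnt O1 O2"
    using hs W(4) unfolding Hausdorff_space_compact_sets by metis
  show thesis
  proof (rule that[of "O1 \<inter> U" O2])
    show "openin T (O1 \<inter> U)"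
      using O(1) U by (rule openin_Int)
    show "{q \<in> topspace T. F q = F p} \<subseteq> O1 \<inter> U \<union> O2"
      using W(3,4,6) O(3,4) unfolding L_def[symmetric] disjnt_def by auto
  qed (use O W(5) CU in \<open>auto simp: disjnt_def\<close>)
qed

text \<open>Upper semicontinuity of the decomposition of T into level-set components.\<close>

lemma reeb_cls_saturated_neighbourhood:
  assumes cs: "compact_space T" and hs: "Hausdorff_space T"
    and F: "continuous_map T euclideanreal F"
    and p: "p \<in> topspace T" and U: "openin T U" and CU: "reeb_cls T F p \<subseteq> U"
  obtains V where "openin T V" "reeb_cls T F p \<subseteq> V" "V \<subseteq> U" "\<And>q. q \<in> V \<Longrightarrow> reeb_cls T F q \<subseteq> V"
proof -
  obtain O1 O2 where O: "openin T O1" "openin T O2" "disjnt O1 O2"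
    "reeb_cls T F p \<subseteq> O1" "O1 \<subseteq> U" "{q \<in> topspace T. F q = F p} \<subseteq> O1 \<union> O2"
    using reeb_cls_separating_opens[OF assms] by blast
  obtain \<delta> where \<delta>: "\<delta> > 0" "{q \<in> topspace T. \<bar>F q - F p\<bar> < \<delta>} \<subseteq> O1 \<union> O2"
    using level_set_neighbourhood[OF cs F openin_Un[OF O(1,2)] O(6)] by blast
  define V where "V = O1 \<inter> {q \<in> topspace T. \<bar>F q - F p\<bar> < \<delta>}"
  have "openin T {q \<in> topspace T. \<bar>F q - F p\<bar> < \<delta>}"
    using openin_continuous_map_preimage[OF F, of "ball (F p) \<delta>"]
    by (simp add: dist_real_def abs_minus_commute)
  then have "openin T V"
    unfolding V_def using O(1) by (simp add: openin_Int)
  moreover have "reeb_cls T F p \<subseteq> V"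
    using O(4) \<delta>(1) reeb_cls_subset_level[of T F p] by (auto simp: V_def)
  moreover have "reeb_cls T F q \<subseteq> V" if q: "q \<in> V" for q
  proof -
    have level: "reeb_cls T F q \<subseteq> {r \<in> topspace T. \<bar>F r - F p\<bar> < \<delta>}"
      using q reeb_cls_subset_level[of T F q] by (auto simp: V_def)
    have "O2 \<inter> reeb_cls T F q = {}"
      using connectedinD[OF connectedin_reeb_cls O(1,2)] level \<delta>(2) O(3) q mem_reeb_cls_self[of q T F]
      by (auto simp: V_def disjnt_def)
    then show ?thesis
      using level \<delta>(2) by (auto simp: V_def)
  qed
  ultimately show thesis
    using that O(5) V_def by blast
qed

lemma closed_map_reeb_cls:
  assumes "compact_space T" "Hausdorff_space T" "continuous_map T euclideanreal F"
  shows "closed_map T (reeb_top T F) (reeb_cls T F)"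
  unfolding closed_map_fibre_neighbourhood
proof (intro conjI allI impI)
  show "reeb_cls T F \<in> topspace T \<rightarrow> topspace (reeb_top T F)"
    by (simp add: topspace_reeb_top)
  fix U c
  assume H: "openin T U \<and> c \<in> topspace (reeb_top T F) \<and> {x \<in> topspace T. reeb_cls T F x = c} \<subseteq> U"
  then obtain p where p: "p \<in> topspace T" "c = reeb_cls T F p"
    unfolding topspace_reeb_top by blast
  have U: "openin T U" "reeb_cls T F p \<subseteq> U"
    using H reeb_cls_fibre[OF p(1), of F] unfolding p(2) by simp_all
  obtain V where V: "openin T V" "reeb_cls T F p \<subseteq> V" "V \<subseteq> U" "\<And>q. q \<in> V \<Longrightarrow> reeb_cls T F q \<subseteq> V"
    using reeb_cls_saturated_neighbourhood[OF assms p(1) U] by blast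
  have saturated: "{x \<in> topspace T. reeb_cls T F x \<in> reeb_cls T F ` V} = V"
  proof (intro equalityI subsetI)
    fix x assume "x \<in> {x \<in> topspace T. reeb_cls T F x \<in> reeb_cls T F ` V}"
    then obtain q where "x \<in> topspace T" "q \<in> V" "reeb_cls T F x = reeb_cls T F q"
      by blast
    then show "x \<in> V"
      using V(4) mem_reeb_cls_self[of x T F] by auto
  next
    fix x assume "x \<in> V"
    then show "x \<in> {x \<in> topspace T. reeb_cls T F x \<in> reeb_cls T F ` V}"
      using openin_subset[OF V(1)] by auto
  qed
  show "\<exists>W. openin (reeb_top T F) W \<and> c \<in> W \<and> {x \<in> topspace T. reeb_cls T F x \<in> W} \<subseteq> U"
  proof (intro exI conjI)
    have "\<And>W. \<lbrakk>openin T W; {x \<in> topspace T. reeb_cls T F x \<in> reeb_cls T F ` W} \<subseteq> W\<rbrakk>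
        \<Longrightarrow> openin (reeb_top T F) (reeb_cls T F ` W)"
      using quotient_map_reeb_cls[of T F] unfolding quotient_map_saturated_open by blast
    then show "openin (reeb_top T F) (reeb_cls T F ` V)"
      using V(1) saturated by simp
    show "c \<in> reeb_cls T F ` V"
      using p V(2) mem_reeb_cls_self[OF p(1), of F] by blast
    show "{x \<in> topspace T. reeb_cls T F x \<in> reeb_cls T F ` V} \<subseteq> U"
      using saturated V(3) by simp
  qed
qed

lemma connectedin_reeb_cls_preimage:
  assumes "compact_space T" "Hausdorff_space T" "continuous_map T euclideanreal F"
    and "connectedin (reeb_top T F) A"
  shows "connectedin T {p \<in> topspace T. reeb_cls T F p \<in> A}"
proof -
  have "monotone_map T (reeb_top T F) (reeb_cls T F) \<longleftrightarrow>
      (\<forall>C. connectedin (reeb_top T F) C \<longrightarrow> connectedin T {p \<in> topspace T. reeb_cls T F p \<in> C})"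
    by (rule monotone_closed_map[OF quotient_imp_continuous_map[OF quotient_map_reeb_cls]
          closed_map_reeb_cls[OF assms(1-3)] topspace_reeb_top[symmetric]])
  then show ?thesis
    using monotone_map_reeb_cls[of T F] assms(4) by blast
qed

section \<open>Geometric realizations of graphs\<close>

lemma istopology_rtop:
  "istopology (\<lambda>U. U \<subseteq> rpoints V E lo hi fv \<and>
     (\<forall>e\<in>E. openin (top_of_set {fv (lo e)..fv (hi e)})
                 {h \<in> {fv (lo e)..fv (hi e)}. remb lo hi fv e h \<in> U}))"
proof -
  have inter: "{h \<in> I. remb lo hi fv e h \<in> S \<inter> T} =
      {h \<in> I. remb lo hi fv e h \<in> S} \<inter> {h \<in> I. remb lo hi fv e h \<in> T}" for I S T e
    by auto
  have union: "{h \<in> I. remb lo hi fv e h \<in> \<Union>K} = (\<Union>S\<in>K. {h \<in> I. remb lo hi fv e h \<in> S})"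
    for I K e
    by auto
  show ?thesis
    unfolding istopology_def inter union by (auto intro: openin_Int openin_Union)
qed

lemma openin_rtop:
  "openin (rtop V E lo hi fv) U \<longleftrightarrow> U \<subseteq> rpoints V E lo hi fv \<and>
     (\<forall>e\<in>E. openin (top_of_set {fv (lo e)..fv (hi e)})
                 {h \<in> {fv (lo e)..fv (hi e)}. remb lo hi fv e h \<in> U})"
  unfolding rtop_def topology_inverse'[OF istopology_rtop] by (rule refl)

lemma remb_in_rpoints:
  assumes "mgraph V E lo hi fv" and "e \<in> E" and "h \<in> {fv (lo e)..fv (hi e)}"
  shows "remb lo hi fv e h \<in> rpoints V E lo hi fv"
  using assms unfolding mgraph_def remb_def rpoints_def by auto

lemma rfun_remb: "rfun fv (remb lo hi fv e h) = h"
  unfolding remb_def by auto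

lemma topspace_rtop:
  assumes m: "mgraph V E lo hi fv"
  shows "topspace (rtop V E lo hi fv) = rpoints V E lo hi fv"
proof -
  have "{h \<in> {fv (lo e)..fv (hi e)}. remb lo hi fv e h \<in> rpoints V E lo hi fv} = {fv (lo e)..fv (hi e)}"
    if "e \<in> E" for e
    using remb_in_rpoints[OF m that] by auto
  then have "openin (rtop V E lo hi fv) (rpoints V E lo hi fv)"
    unfolding openin_rtop by simp
  then show ?thesis
    by (metis openin_rtop openin_subset openin_topspace subset_antisym)
qed

lemma continuous_map_remb:
  assumes m: "mgraph V E lo hi fv" and e: "e \<in> E"
  shows "continuous_map (top_of_set {fv (lo e)..fv (hi e)}) (rtop V E lo hi fv) (remb lo hi fv e)"
  unfolding continuous_map
  using remb_in_rpoints[OF m e] e by (auto simp: topspace_rtop[OF m] openin_rtop)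

lemma continuous_map_rtop_realI:
  assumes m: "mgraph V E lo hi fv"
    and "\<And>e. e \<in> E \<Longrightarrow> continuous_on {fv (lo e)..fv (hi e)} (\<lambda>h. u (remb lo hi fv e h))"
  shows "continuous_map (rtop V E lo hi fv) euclideanreal u"
  unfolding continuous_map
proof (intro conjI allI impI)
  fix W :: "real set" assume W: "openin euclideanreal W"
  show "openin (rtop V E lo hi fv) {x \<in> topspace (rtop V E lo hi fv). u x \<in> W}"
    unfolding openin_rtop topspace_rtop[OF m]
  proof (intro conjI ballI)
    fix e assume e: "e \<in> E"
    have eq: "{h \<in> {fv (lo e)..fv (hi e)}. remb lo hi fv e h \<in> {x \<in> rpoints V E lo hi fv. u x \<in> W}}
       = {h \<in> topspace (top_of_set {fv (lo e)..fv (hi e)}). u (remb lo hi fv e h) \<in> W}"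
      using remb_in_rpoints[OF m e] by auto
    have "continuous_map (top_of_set {fv (lo e)..fv (hi e)}) euclideanreal (\<lambda>h. u (remb lo hi fv e h))"
      using assms(2)[OF e] by simp
    then show "openin (top_of_set {fv (lo e)..fv (hi e)})
       {h \<in> {fv (lo e)..fv (hi e)}. remb lo hi fv e h \<in> {x \<in> rpoints V E lo hi fv. u x \<in> W}}"
      unfolding eq using W by (rule openin_continuous_map_preimage)
  qed auto
qed auto

lemma compact_space_rtop:
  assumes m: "mgraph V E lo hi fv"
  shows "compact_space (rtop V E lo hi fv)"
proof -
  let ?edges = "\<Union>e\<in>E. remb lo hi fv e ` {fv (lo e)..fv (hi e)}"
  have "Ed e h \<in> ?edges" if "e \<in> E" "fv (lo e) < h" "h < fv (hi e)" for e h
  proof -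
    have "Ed e h = remb lo hi fv e h" "h \<in> {fv (lo e)..fv (hi e)}"
      using that unfolding remb_def by auto
    then show ?thesis
      using that(1) by blast
  qed
  then have "rpoints V E lo hi fv \<subseteq> Nd ` V \<union> ?edges"
    unfolding rpoints_def by blast
  moreover have "Nd ` V \<union> ?edges \<subseteq> rpoints V E lo hi fv"
    using remb_in_rpoints[OF m] unfolding rpoints_def by blast
  ultimately have cover: "rpoints V E lo hi fv = Nd ` V \<union> ?edges"
    by (rule subset_antisym)
  have fin: "finite V" "finite E"
    using m unfolding mgraph_def by auto
  have "compactin (rtop V E lo hi fv) (Nd ` V)"
    by (rule finite_imp_compactin) (use fin in \<open>auto simp: topspace_rtop[OF m] rpoints_def\<close>)
  moreover have "compactin (rtop V E lo hi fv) ?edges"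
  proof (rule compactin_Union)
    fix S assume "S \<in> (\<lambda>e. remb lo hi fv e ` {fv (lo e)..fv (hi e)}) ` E"
    then obtain e where e: "e \<in> E" "S = remb lo hi fv e ` {fv (lo e)..fv (hi e)}"
      by auto
    have "compactin (top_of_set {fv (lo e)..fv (hi e)}) {fv (lo e)..fv (hi e)}"
      by (simp add: compactin_subtopology)
    then show "compactin (rtop V E lo hi fv) S"
      unfolding e(2) by (rule image_compactin[OF _ continuous_map_remb[OF m e(1)]])
  qed (use fin in simp)
  ultimately show ?thesis
    unfolding compact_space_def topspace_rtop[OF m] cover by (rule compactin_Un)
qed

lemma Hausdorff_space_if_real_functions_separate:
  assumes "\<And>x y. \<lbrakk>x \<in> topspace X; y \<in> topspace X; x \<noteq> y\<rbrakk> \<Longrightarrow>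
             \<exists>u. continuous_map X euclideanreal u \<and> u x \<noteq> u y"
  shows "Hausdorff_space X"
  unfolding Hausdorff_space_def
proof (intro allI impI)
  fix x y assume "x \<in> topspace X \<and> y \<in> topspace X \<and> x \<noteq> y"
  then obtain u where u: "continuous_map X euclideanreal u" "u x \<noteq> u y"
    using assms by metis
  then obtain U W where "open U" "open W" "u x \<in> U" "u y \<in> W" "U \<inter> W = {}"
    using separation_t2 by metis
  then show "\<exists>U V. openin X U \<and> openin X V \<and> x \<in> U \<and> y \<in> V \<and> disjnt U V"
    using \<open>x \<in> topspace X \<and> y \<in> topspace X \<and> x \<noteq> y\<close>
      openin_continuous_map_preimage[OF u(1), of U] openin_continuous_map_preimage[OF u(1), of W]
    by (intro exI[of _ "{x \<in> topspace X. u x \<in> U}"] exI[of _ "{x \<in> topspace X. u x \<in> W}"])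
      (auto simp: disjnt_def)
qed

text \<open>Points of the realization are separated by the barycentric weight of a node and
by a bump function supported on the interior of an edge.\<close>

definition node_weight :: "(nat \<Rightarrow> nat) \<Rightarrow> (nat \<Rightarrow> nat) \<Rightarrow> (nat \<Rightarrow> real) \<Rightarrow> nat \<Rightarrow> rpt \<Rightarrow> real" where
  "node_weight lo hi fv w p = (case p of Nd w' \<Rightarrow> if w' = w then 1 else 0
     | Ed e h \<Rightarrow> (if lo e = w then (fv (hi e) - h) / (fv (hi e) - fv (lo e)) else 0)
                + (if hi e = w then (h - fv (lo e)) / (fv (hi e) - fv (lo e)) else 0))"

definition edge_bump :: "(nat \<Rightarrow> nat) \<Rightarrow> (nat \<Rightarrow> nat) \<Rightarrow> (nat \<Rightarrow> real) \<Rightarrow> nat \<Rightarrow> rpt \<Rightarrow> real" where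
  "edge_bump lo hi fv e0 p = (case p of Nd w' \<Rightarrow> 0
     | Ed e h \<Rightarrow> if e = e0 then (h - fv (lo e)) * (fv (hi e) - h) else 0)"

lemma continuous_map_node_weight:
  assumes m: "mgraph V E lo hi fv"
  shows "continuous_map (rtop V E lo hi fv) euclideanreal (node_weight lo hi fv w)"
proof (rule continuous_map_rtop_realI[OF m])
  fix e assume e: "e \<in> E"
  define a b where "a = fv (lo e)" and "b = fv (hi e)"
  have ab: "a < b"
    using m e unfolding mgraph_def a_def b_def by auto
  let ?G = "\<lambda>h. (if lo e = w then 1 else 0) * ((b - h) / (b - a))
      + (if hi e = w then 1 else 0) * ((h - a) / (b - a))"
  have "continuous_on {a..b} ?G"
    by (intro continuous_intros) (use ab in auto)
  moreover have "node_weight lo hi fv w (remb lo hi fv e h) = ?G h" if "h \<in> {a..b}" for h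
    using ab that unfolding node_weight_def remb_def by (auto simp: a_def b_def)
  ultimately show "continuous_on {fv (lo e)..fv (hi e)} (\<lambda>h. node_weight lo hi fv w (remb lo hi fv e h))"
    unfolding a_def[symmetric] b_def[symmetric] using continuous_on_eq by (metis (no_types, lifting))
qed

lemma continuous_map_edge_bump:
  assumes m: "mgraph V E lo hi fv"
  shows "continuous_map (rtop V E lo hi fv) euclideanreal (edge_bump lo hi fv e0)"
proof (rule continuous_map_rtop_realI[OF m])
  fix e assume e: "e \<in> E"
  define a b where "a = fv (lo e)" and "b = fv (hi e)"
  have ab: "a < b"
    using m e unfolding mgraph_def a_def b_def by auto
  let ?G = "\<lambda>h. (if e = e0 then 1 else 0) * ((h - a) * (b - h))"
  have "continuous_on {a..b} ?G"
    by (intro continuous_intros)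
  moreover have "edge_bump lo hi fv e0 (remb lo hi fv e h) = ?G h" if "h \<in> {a..b}" for h
    using ab that unfolding edge_bump_def remb_def by (auto simp: a_def b_def)
  ultimately show "continuous_on {fv (lo e)..fv (hi e)} (\<lambda>h. edge_bump lo hi fv e0 (remb lo hi fv e h))"
    unfolding a_def[symmetric] b_def[symmetric] using continuous_on_eq by (metis (no_types, lifting))
qed

lemma rpoints_separated:
  assumes x: "x \<in> rpoints V E lo hi fv" and y: "y \<in> rpoints V E lo hi fv" and "x \<noteq> y"
  shows "\<exists>w. node_weight lo hi fv w x \<noteq> node_weight lo hi fv w y \<or>
           edge_bump lo hi fv w x \<noteq> edge_bump lo hi fv w y"
proof -
  have bump_pos: "edge_bump lo hi fv e (Ed e h) > 0" if "Ed e h \<in> rpoints V E lo hi fv" for e h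
    using that unfolding edge_bump_def rpoints_def by auto
  show ?thesis
  proof (cases x)
    case (Nd w)
    show ?thesis
    proof (cases y)
      case (Nd w')
      then have "node_weight lo hi fv w x \<noteq> node_weight lo hi fv w y"
        using \<open>x = Nd w\<close> \<open>x \<noteq> y\<close> by (simp add: node_weight_def)
      then show ?thesis by blast
    next
      case (Ed e h)
      then have "edge_bump lo hi fv e y > 0"
        using bump_pos y by simp
      then have "edge_bump lo hi fv e x \<noteq> edge_bump lo hi fv e y"
        using \<open>x = Nd w\<close> by (simp add: edge_bump_def)
      then show ?thesis by blast
    qed
  next
    case (Ed e h)
    then have pos: "edge_bump lo hi fv e x > 0"
      using bump_pos x by simp
    show ?thesis
    proof (cases "\<exists>h'. y = Ed e h'")
      case True
      then obtain h' where y': "y = Ed e h'" ..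
      have "lo e \<noteq> hi e" "fv (lo e) < fv (hi e)" "h \<noteq> h'"
        using x \<open>x = Ed e h\<close> y' \<open>x \<noteq> y\<close> unfolding rpoints_def by auto
      then have "node_weight lo hi fv (lo e) x \<noteq> node_weight lo hi fv (lo e) y"
        using \<open>x = Ed e h\<close> y' unfolding node_weight_def by (auto simp: divide_simps)
      then show ?thesis by blast
    next
      case False
      then have "edge_bump lo hi fv e y = 0"
        by (cases y) (auto simp: edge_bump_def)
      then show ?thesis
        using pos by (metis less_irrefl)
    qed
  qed
qed

lemma Hausdorff_space_rtop:
  assumes m: "mgraph V E lo hi fv"
  shows "Hausdorff_space (rtop V E lo hi fv)"
proof (rule Hausdorff_space_if_real_functions_separate)
  fix x y
  assume "x \<in> topspace (rtop V E lo hi fv)" "y \<in> topspace (rtop V E lo hi fv)" "x \<noteq> y"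
  then have "\<exists>w. node_weight lo hi fv w x \<noteq> node_weight lo hi fv w y \<or>
           edge_bump lo hi fv w x \<noteq> edge_bump lo hi fv w y"
    using rpoints_separated topspace_rtop[OF m] by blast
  then show "\<exists>u. continuous_map (rtop V E lo hi fv) euclideanreal u \<and> u x \<noteq> u y"
    using continuous_map_node_weight[OF m] continuous_map_edge_bump[OF m] by blast
qed

lemma continuous_map_rfun:
  assumes m: "mgraph V E lo hi fv"
  shows "continuous_map (rtop V E lo hi fv) euclideanreal (rfun fv)"
  by (rule continuous_map_rtop_realI[OF m]) (simp add: rfun_remb)

lemma reeb_graph_compact_Hausdorff:
  assumes "is_reeb_graph X f"
  shows "compact_space X" "Hausdorff_space X" "continuous_map X euclideanreal f"
proof -
  obtain V E lo hi fv h where m: "mgraph V E lo hi fv"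
    and hm: "homeomorphic_map (rtop V E lo hi fv) X h"
    and hf: "\<forall>p\<in>rpoints V E lo hi fv. f (h p) = rfun fv p"
    using assms unfolding is_reeb_graph_def by metis
  have hs: "rtop V E lo hi fv homeomorphic_space X"
    using hm homeomorphic_map_imp_homeomorphic_space by blast
  show "compact_space X"
    using homeomorphic_compact_space[OF hs] compact_space_rtop[OF m] by simp
  show "Hausdorff_space X"
    using homeomorphic_Hausdorff_space[OF hs] Hausdorff_space_rtop[OF m] by simp
  obtain g where "homeomorphic_maps (rtop V E lo hi fv) X h g"
    using hm homeomorphic_map_maps by metis
  then have g: "continuous_map X (rtop V E lo hi fv) g" "\<And>y. y \<in> topspace X \<Longrightarrow> h (g y) = y"
    unfolding homeomorphic_maps_def by auto
  have "f y = rfun fv (g y)" if "y \<in> topspace X" for y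
  proof -
    have "g y \<in> rpoints V E lo hi fv"
      using g(1) that topspace_rtop[OF m] unfolding continuous_map_def by auto
    then show ?thesis
      using hf g(2)[OF that] by metis
  qed
  then show "continuous_map X euclideanreal f"
    using continuous_map_compose[OF g(1) continuous_map_rfun[OF m]] continuous_map_eq
    by (metis comp_apply)
qed

section \<open>Thickenings and the shift\<close>

lemma topspace_thick_top: "topspace (thick_top X \<epsilon>) = topspace X \<times> {-\<epsilon>..\<epsilon>}"
  unfolding thick_top_def by simp

lemma compact_space_thick_top: "compact_space X \<Longrightarrow> compact_space (thick_top X \<epsilon>)"
  unfolding thick_top_def compact_space_prod_topology
  by (simp add: compact_space_subtopology)

lemma Hausdorff_space_thick_top: "Hausdorff_space X \<Longrightarrow> Hausdorff_space (thick_top X \<epsilon>)"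
  unfolding thick_top_def Hausdorff_space_prod_topology
  by (simp add: Hausdorff_space_subtopology)

lemma continuous_map_thick_fun:
  assumes "continuous_map X euclideanreal f"
  shows "continuous_map (thick_top X \<epsilon>) euclideanreal (thick_fun f)"
proof -
  have "continuous_map (thick_top X \<epsilon>) euclideanreal (\<lambda>p. f (fst p))"
    unfolding thick_top_def using continuous_map_compose[OF continuous_map_fst assms]
    by (simp add: o_def)
  moreover have "continuous_map (thick_top X \<epsilon>) euclideanreal snd"
    unfolding thick_top_def
    using continuous_map_snd[of X "top_of_set {-\<epsilon>..\<epsilon>}"] continuous_map_in_subtopology by blast
  ultimately have "continuous_map (thick_top X \<epsilon>) euclideanreal (\<lambda>p. f (fst p) + snd p)"
    by (rule continuous_map_add)
  then show ?thesis
    unfolding thick_fun_def by (simp add: case_prod_beta')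
qed

lemma mem_sm_pi:
  assumes "(x, t) \<in> sm_pi X f \<epsilon> p"
  shows "x \<in> topspace X" "t \<in> {-\<epsilon>..\<epsilon>}" "f x + t = thick_fun f p"
  using assms reeb_cls_subset_level[of "thick_top X \<epsilon>" "thick_fun f" p]
  unfolding sm_pi_def by (auto simp: topspace_thick_top thick_fun_def)

lemma sm_fun_eq:
  assumes "a \<in> topspace (sm_top X f \<epsilon>)" and "(y, s) \<in> a"
  shows "sm_fun f a = f y + s"
  using reeb_cls_of_mem(3)[OF assms[unfolded sm_top_def]]
  unfolding sm_fun_def thick_fun_def by simp

lemma sm_pi_of_mem:
  assumes "a \<in> topspace (sm_top X f \<epsilon>)" and "r \<in> a"
  shows "r \<in> topspace (thick_top X \<epsilon>)" "sm_pi X f \<epsilon> r = a"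
  using reeb_cls_of_mem(1,2)[OF assms[unfolded sm_top_def]] unfolding sm_pi_def by auto

lemma sm_top_point_nonempty:
  assumes "a \<in> topspace (sm_top X f \<epsilon>)"
  shows "\<exists>p. p \<in> a"
proof -
  obtain r where "r \<in> topspace (thick_top X \<epsilon>)" "a = reeb_cls (thick_top X \<epsilon>) (thick_fun f) r"
    using assms unfolding sm_top_def topspace_reeb_top by blast
  then show ?thesis
    by (blast intro: mem_reeb_cls_self)
qed

text \<open>The shift evaluates through representatives chosen by SOME, so x and (y, s) are only
known to exist.\<close>

lemma sm_map_sm_pi:
  assumes \<phi>: "reeb_morphism X1 f1 (sm_top X2 f2 \<epsilon>) (sm_fun f2) \<phi>"
    and v: "v \<in> topspace X1" and t0: "t0 \<in> {-\<delta>..\<delta>}"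
  obtains x y s where "x \<in> fst ` sm_pi X1 f1 \<delta> (v, t0)" "(y, s) \<in> \<phi> x"
    "sm_map X2 f2 \<epsilon> \<delta> \<phi> (sm_pi X1 f1 \<delta> (v, t0)) = sm_pi X2 f2 (\<epsilon> + \<delta>) (y, f1 v + t0 - f2 y)"
proof -
  define K where "K = sm_pi X1 f1 \<delta> (v, t0)"
  have "(v, t0) \<in> K"
    unfolding K_def sm_pi_def using v t0 by (simp add: mem_reeb_cls_self topspace_thick_top)
  then have "(SOME xt. xt \<in> K) \<in> K"
    by (rule someI)
  then obtain x t where xt: "(SOME xt. xt \<in> K) = (x, t)" "(x, t) \<in> K"
    by (cases "SOME xt. xt \<in> K") auto
  then have x: "x \<in> topspace X1" "f1 x + t = f1 v + t0"
    using mem_sm_pi[of x t X1 f1 \<delta> "(v, t0)"] unfolding K_def by (auto simp: thick_fun_def)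
  have \<phi>x: "\<phi> x \<in> topspace (sm_top X2 f2 \<epsilon>)" "sm_fun f2 (\<phi> x) = f1 x"
    using \<phi> x(1) unfolding reeb_morphism_def continuous_map_def by auto
  have "(SOME ys. ys \<in> \<phi> x) \<in> \<phi> x"
    using sm_top_point_nonempty[OF \<phi>x(1)] by (rule someI_ex)
  then obtain y s where ys: "(SOME ys. ys \<in> \<phi> x) = (y, s)" "(y, s) \<in> \<phi> x"
    by (cases "SOME ys. ys \<in> \<phi> x") auto
  have "s + t = f1 v + t0 - f2 y"
    using sm_fun_eq[OF \<phi>x(1) ys(2)] \<phi>x(2) x(2) by simp
  then have "sm_map X2 f2 \<epsilon> \<delta> \<phi> K = sm_pi X2 f2 (\<epsilon> + \<delta>) (y, f1 v + t0 - f2 y)"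
    unfolding sm_map_def xt(1) by (simp add: ys(1))
  moreover have "x \<in> fst ` K"
    using xt(2) by (rule image_eqI[rotated]) simp
  ultimately show thesis
    using that ys(2) unfolding K_def by blast
qed

lemma connectedin_sm_pi_preimage:
  assumes "compact_space X" "Hausdorff_space X" "continuous_map X euclideanreal f"
    and "connectedin (sm_top X f \<epsilon>) A"
  shows "connectedin (thick_top X \<epsilon>) {r \<in> topspace (thick_top X \<epsilon>). sm_pi X f \<epsilon> r \<in> A}"
  unfolding sm_pi_def
  by (rule connectedin_reeb_cls_preimage[OF compact_space_thick_top[OF assms(1)]
        Hausdorff_space_thick_top[OF assms(2)] continuous_map_thick_fun[OF assms(3)]])
    (use assms(4) in \<open>simp add: sm_top_def\<close>)

lemma continuous_map_vertical_slide:
  assumes f: "continuous_map X euclideanreal f"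
    and slide: "\<And>r. r \<in> D \<Longrightarrow> \<bar>c - f (fst r)\<bar> \<le> \<eta>"
  shows "continuous_map (subtopology (thick_top X \<epsilon>) D) (thick_top X \<eta>) (\<lambda>r. (fst r, c - f (fst r)))"
proof -
  have fst: "continuous_map (subtopology (thick_top X \<epsilon>) D) X fst"
    unfolding thick_top_def by (rule continuous_map_from_subtopology[OF continuous_map_fst])
  then have "continuous_map (subtopology (thick_top X \<epsilon>) D) euclideanreal (\<lambda>r. c - f (fst r))"
    using continuous_map_compose[OF fst f] by (simp add: o_def continuous_map_diff)
  moreover have "(\<lambda>r. c - f (fst r)) \<in> topspace (subtopology (thick_top X \<epsilon>) D) \<rightarrow> {-\<eta>..\<eta>}"
  proof
    fix r assume "r \<in> topspace (subtopology (thick_top X \<epsilon>) D)"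
    then show "c - f (fst r) \<in> {-\<eta>..\<eta>}"
      using slide[of r] by (auto simp: abs_le_iff)
  qed
  ultimately have "continuous_map (subtopology (thick_top X \<epsilon>) D) (top_of_set {-\<eta>..\<eta>})
      (\<lambda>r. c - f (fst r))"
    by (simp add: continuous_map_in_subtopology)
  from continuous_map_pairedI[OF fst this] show ?thesis
    by (simp add: thick_top_def)
qed

text \<open>The preimage of A in the \<epsilon>-thickening is connected, and the vertical slide
(y, s) \<mapsto> (y, c - f y) maps it continuously into the level c of the (\<epsilon> + \<delta>)-thickening.\<close>

lemma sm_pi_level_eq_on_connected_band:
  assumes X: "compact_space X" "Hausdorff_space X" "continuous_map X euclideanreal f"
    and A: "connectedin (sm_top X f \<epsilon>) A"
    and band: "\<And>a. a \<in> A \<Longrightarrow> \<bar>sm_fun f a - c\<bar> \<le> \<delta>"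
    and a: "a \<in> A" "(y, s) \<in> a" and b: "b \<in> A" "(y', s') \<in> b"
  shows "sm_pi X f (\<epsilon> + \<delta>) (y, c - f y) = sm_pi X f (\<epsilon> + \<delta>) (y', c - f y')"
proof -
  define D where "D = {r \<in> topspace (thick_top X \<epsilon>). sm_pi X f \<epsilon> r \<in> A}"
  define k where "k = (\<lambda>r :: _ \<times> real. (fst r, c - f (fst r)))"
  define T where "T = thick_top X (\<epsilon> + \<delta>)"
  have Asub: "A \<subseteq> topspace (sm_top X f \<epsilon>)"
    using A connectedin_subset_topspace by metis
  have inD: "r \<in> D" if "x \<in> A" "r \<in> x" for x r
  proof -
    have "x \<in> topspace (sm_top X f \<epsilon>)"
      using that(1) Asub by blast
    then show ?thesis
      using sm_pi_of_mem[OF _ that(2)] that(1) unfolding D_def by simp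
  qed
  have "\<bar>c - f (fst r)\<bar> \<le> \<epsilon> + \<delta>" if r: "r \<in> D" for r
  proof -
    have rT: "r \<in> topspace (thick_top X \<epsilon>)" and rA: "sm_pi X f \<epsilon> r \<in> A"
      using r unfolding D_def by auto
    have "(fst r, snd r) \<in> sm_pi X f \<epsilon> r"
      using rT unfolding sm_pi_def by (simp add: mem_reeb_cls_self)
    then have "sm_fun f (sm_pi X f \<epsilon> r) = f (fst r) + snd r"
      by (rule sm_fun_eq[OF subsetD[OF Asub rA]])
    moreover have "\<bar>snd r\<bar> \<le> \<epsilon>"
      using rT by (auto simp: topspace_thick_top)
    ultimately show ?thesis
      using band[OF rA] unfolding abs_le_iff by linarith
  qed
  then have k: "continuous_map (subtopology (thick_top X \<epsilon>) D) T k"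
    unfolding k_def T_def by (rule continuous_map_vertical_slide[OF X(3)])
  have "connectedin (thick_top X \<epsilon>) D"
    unfolding D_def by (rule connectedin_sm_pi_preimage[OF X A])
  then have "connectedin T (k ` D)"
    by (intro connectedin_continuous_map_image[OF k]) (simp add: connectedin_subtopology)
  moreover have "k ` D \<subseteq> topspace T"
    using continuous_map_image_subset_topspace[OF k] unfolding D_def by auto
  then have "k ` D \<subseteq> {r \<in> topspace T. thick_fun f r = thick_fun f (k (y, s))}"
    unfolding k_def thick_fun_def by auto
  moreover have "k (y, s) \<in> k ` D"
    by (rule imageI[OF inD[OF a]])
  ultimately have "k ` D \<subseteq> reeb_cls T (thick_fun f) (k (y, s))"
    by (rule reeb_cls_maximal)
  then have "k (y', s') \<in> reeb_cls T (thick_fun f) (k (y, s))"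
    using imageI[OF inD[OF b], of k] by (rule subsetD)
  then have "reeb_cls T (thick_fun f) (k (y', s')) = reeb_cls T (thick_fun f) (k (y, s))"
    by (rule reeb_cls_eq)
  then show ?thesis
    unfolding sm_pi_def T_def k_def by simp
qed

lemma sm_pi_level_in_Pset:
  assumes "z \<in> topspace (sm_top X f \<epsilon>)" "(y, s) \<in> z" "\<bar>sm_fun f z - c\<bar> \<le> \<epsilon>"
  shows "sm_pi X f (2 * \<epsilon>) (y, c - f y) \<in> Pset X f \<epsilon> z"
proof -
  have t: "c - f y - s \<in> {-\<epsilon>..\<epsilon>}"
    using assms(3) sm_fun_eq[OF assms(1,2)] by auto
  have "sm_pi X f (2 * \<epsilon>) (y, c - f y) = sm_pi X f (2 * \<epsilon>) (y, s + (c - f y - s))"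
    by simp
  then show ?thesis
    unfolding Pset_def using assms(2) t by blast
qed

section \<open>Monotone paths of bounded height\<close>

lemma monotone_on_unit_interval_between:
  fixes h :: "real \<Rightarrow> real"
  assumes "mono_on {0..1} h \<or> antimono_on {0..1} h" and "t \<in> {0..1}"
  shows "min (h 0) (h 1) \<le> h t" "h t \<le> max (h 0) (h 1)"
  using assms mono_onD[of "{0..1}" h 0 t] mono_onD[of "{0..1}" h t 1]
    monotone_onD[of "{0..1}" "(\<le>)" "(\<ge>)" h 0 t] monotone_onD[of "{0..1}" "(\<le>)" "(\<ge>)" h t 1]
  by auto

lemma monotone_on_unit_interval_height:
  fixes h :: "real \<Rightarrow> real"
  assumes "mono_on {0..1} h \<or> antimono_on {0..1} h"
  shows "(SUP t\<in>{0..1}. h t) - (INF t\<in>{0..1}. h t) = \<bar>h 1 - h 0\<bar>"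
proof -
  have "(SUP t\<in>{0..1}. h t) = max (h 0) (h 1)"
    by (rule cSup_eq_maximum) (use monotone_on_unit_interval_between[OF assms] in \<open>auto simp: max_def\<close>)
  moreover have "(INF t\<in>{0..1}. h t) = min (h 0) (h 1)"
    by (rule cInf_eq_minimum) (use monotone_on_unit_interval_between[OF assms] in \<open>auto simp: min_def\<close>)
  ultimately show ?thesis
    by (simp add: max_def min_def)
qed

lemma Mminus_band:
  assumes "x \<in> Mminus X f \<epsilon> z"
  obtains g where "pathin X g" "g 0 = x" "g 1 = z"
    "\<And>\<tau>. \<tau> \<in> {0..1} \<Longrightarrow> \<bar>f (g \<tau>) - (f x + \<epsilon>)\<bar> \<le> \<epsilon>"
proof -
  obtain g where g: "monotone_path X f g" "g 0 = x" "g 1 = z" "path_height f g \<le> 2 * \<epsilon>"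
    "\<And>\<tau>. \<tau> \<in> {0..1} \<Longrightarrow> f (g \<tau>) \<le> f z"
    using assms unfolding Mminus_def by blast
  have mono: "mono_on {0..1} (f \<circ> g) \<or> antimono_on {0..1} (f \<circ> g)"
    using g(1) unfolding monotone_path_def by blast
  have "f x \<le> f z" "f z - f x \<le> 2 * \<epsilon>"
    using g(2-5) monotone_on_unit_interval_height[OF mono] unfolding path_height_def by auto
  then have "\<bar>f (g \<tau>) - (f x + \<epsilon>)\<bar> \<le> \<epsilon>" if "\<tau> \<in> {0..1}" for \<tau>
    using monotone_on_unit_interval_between[OF mono that] g(2,3) by (auto simp: abs_le_iff)
  then show thesis
    using that g(1-3) unfolding monotone_path_def by blast
qed

lemma Mplus_band:
  assumes "x \<in> Mplus X f \<epsilon> z"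
  obtains g where "pathin X g" "g 0 = x" "g 1 = z"
    "\<And>\<tau>. \<tau> \<in> {0..1} \<Longrightarrow> \<bar>f (g \<tau>) - (f x - \<epsilon>)\<bar> \<le> \<epsilon>"
proof -
  obtain g where g: "monotone_path X f g" "g 0 = x" "g 1 = z" "path_height f g \<le> 2 * \<epsilon>"
    "\<And>\<tau>. \<tau> \<in> {0..1} \<Longrightarrow> f z \<le> f (g \<tau>)"
    using assms unfolding Mplus_def by blast
  have mono: "mono_on {0..1} (f \<circ> g) \<or> antimono_on {0..1} (f \<circ> g)"
    using g(1) unfolding monotone_path_def by blast
  have "f z \<le> f x" "f x - f z \<le> 2 * \<epsilon>"
    using g(2-5) monotone_on_unit_interval_height[OF mono] unfolding path_height_def by auto
  then have "\<bar>f (g \<tau>) - (f x - \<epsilon>)\<bar> \<le> \<epsilon>" if "\<tau> \<in> {0..1}" for \<tau>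
    using monotone_on_unit_interval_between[OF mono that] g(2,3) by (auto simp: abs_le_iff)
  then show thesis
    using that g(1-3) unfolding monotone_path_def by blast
qed

lemma connectedin_image_fst_sm_pi:
  assumes "continuous_map X Y \<phi>"
  shows "connectedin Y (\<phi> ` fst ` sm_pi X f \<epsilon> p)"
  using connectedin_reeb_cls[of "thick_top X \<epsilon>" "thick_fun f" p]
  unfolding sm_pi_def thick_top_def
  by (intro connectedin_continuous_map_image[OF assms] connectedin_continuous_map_image[OF continuous_map_fst])

lemma sm_map_sm_pi_in_Pset:
  assumes X2: "compact_space X2" "Hausdorff_space X2" "continuous_map X2 euclideanreal f2"
    and \<phi>: "reeb_morphism X1 f1 (sm_top X2 f2 \<epsilon>) (sm_fun f2) \<phi>"
    and v: "v \<in> topspace X1" and t0: "t0 \<in> {-\<epsilon>..\<epsilon>}"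
    and g: "pathin (sm_top X2 f2 \<epsilon>) g" "g 0 = \<phi> v" "g 1 = z"
    and band: "\<And>\<tau>. \<tau> \<in> {0..1} \<Longrightarrow> \<bar>sm_fun f2 (g \<tau>) - (f1 v + t0)\<bar> \<le> \<epsilon>"
  shows "sm_map X2 f2 \<epsilon> \<epsilon> \<phi> (sm_pi X1 f1 \<epsilon> (v, t0)) \<in> Pset X2 f2 \<epsilon> z"
proof -
  define K where "K = sm_pi X1 f1 \<epsilon> (v, t0)"
  define A where "A = \<phi> ` fst ` K \<union> g ` {0..1}"
  have \<phi>c: "continuous_map X1 (sm_top X2 f2 \<epsilon>) \<phi>" and \<phi>f: "\<And>x. x \<in> topspace X1 \<Longrightarrow> sm_fun f2 (\<phi> x) = f1 x"
    using \<phi> unfolding reeb_morphism_def by auto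
  obtain x y s where x: "x \<in> fst ` K" and ys: "(y, s) \<in> \<phi> x"
    and map: "sm_map X2 f2 \<epsilon> \<epsilon> \<phi> K = sm_pi X2 f2 (\<epsilon> + \<epsilon>) (y, f1 v + t0 - f2 y)"
    using sm_map_sm_pi[OF \<phi> v t0] unfolding K_def by blast
  have "(v, t0) \<in> K"
    unfolding K_def sm_pi_def using v t0 by (simp add: mem_reeb_cls_self topspace_thick_top)
  then have "\<phi> v \<in> \<phi> ` fst ` K \<inter> g ` {0..1}"
    using g(2) by force
  moreover have "connectedin (sm_top X2 f2 \<epsilon>) (\<phi> ` fst ` K)"
    unfolding K_def by (rule connectedin_image_fst_sm_pi[OF \<phi>c])
  ultimately have A: "connectedin (sm_top X2 f2 \<epsilon>) A"
    unfolding A_def using connectedin_path_image[OF g(1)] by (blast intro: connectedin_Un)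
  have bandA: "\<bar>sm_fun f2 a - (f1 v + t0)\<bar> \<le> \<epsilon>" if a: "a \<in> A" for a
  proof -
    consider p where "p \<in> K" "a = \<phi> (fst p)" | \<tau> where "\<tau> \<in> {0..1}" "a = g \<tau>"
      using a unfolding A_def by blast
    then show ?thesis
    proof cases
      case 1
      then show ?thesis
        using mem_sm_pi[of "fst p" "snd p" X1 f1 \<epsilon> "(v, t0)"] \<phi>f unfolding K_def
        by (auto simp: thick_fun_def)
    qed (use band in auto)
  qed
  have z: "z \<in> topspace (sm_top X2 f2 \<epsilon>)" "z \<in> A"
    using g pathin_subtopology path_image_subset_topspace unfolding A_def
    by (auto simp: pathin_def continuous_map_def)
  obtain q where q: "(fst q, snd q) \<in> z"
    using sm_top_point_nonempty[OF z(1)] by auto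
  have "\<phi> x \<in> A"
    using x unfolding A_def by blast
  have "sm_pi X2 f2 (\<epsilon> + \<epsilon>) (y, f1 v + t0 - f2 y)
      = sm_pi X2 f2 (\<epsilon> + \<epsilon>) (fst q, f1 v + t0 - f2 (fst q))"
    using X2 A bandA \<open>\<phi> x \<in> A\<close> ys z(2) q by (rule sm_pi_level_eq_on_connected_band)
  moreover have "sm_pi X2 f2 (2 * \<epsilon>) (fst q, f1 v + t0 - f2 (fst q)) \<in> Pset X2 f2 \<epsilon> z"
    by (rule sm_pi_level_in_Pset[OF z(1) q bandA[OF z(2)]])
  ultimately show ?thesis
    unfolding K_def[symmetric] map by (metis mult_2)
qed

theorem lemma1:
  fixes X1 :: "'a topology" and f1 :: "'a \<Rightarrow> real"
    and X2 :: "'b topology" and f2 :: "'b \<Rightarrow> real"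
    and \<epsilon> :: real
    and \<phi> :: "'a \<Rightarrow> ('b \<times> real) set" and \<psi> :: "'b \<Rightarrow> ('a \<times> real) set"
  assumes R1: "is_reeb_graph X1 f1" and R2: "is_reeb_graph X2 f2"
    and eps: "\<epsilon> \<ge> 0"
    and il: "interleaving X1 f1 X2 f2 \<epsilon> \<phi> \<psi>"
  shows
   "(\<forall>v z. split_or_max X1 f1 v \<and> split_or_max (sm_top X2 f2 \<epsilon>) (sm_fun f2) z \<and>
        \<phi> v \<in> Mminus (sm_top X2 f2 \<epsilon>) (sm_fun f2) \<epsilon> z
      \<longrightarrow> sm_map X2 f2 \<epsilon> \<epsilon> \<phi> (s_up X1 f1 \<epsilon> v) \<in> Pset X2 f2 \<epsilon> z) \<and>
    (\<forall>v z. join_or_min X1 f1 v \<and> join_or_min (sm_top X2 f2 \<epsilon>) (sm_fun f2) z \<and>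
        \<phi> v \<in> Mplus (sm_top X2 f2 \<epsilon>) (sm_fun f2) \<epsilon> z
      \<longrightarrow> sm_map X2 f2 \<epsilon> \<epsilon> \<phi> (s_down X1 f1 \<epsilon> v) \<in> Pset X2 f2 \<epsilon> z)"
proof -
  note X2 = reeb_graph_compact_Hausdorff[OF R2]
  have \<phi>: "reeb_morphism X1 f1 (sm_top X2 f2 \<epsilon>) (sm_fun f2) \<phi>"
    using il unfolding interleaving_def by blast
  have \<phi>v: "sm_fun f2 (\<phi> v) = f1 v" if "v \<in> topspace X1" for v
    using \<phi> that unfolding reeb_morphism_def by blast
  have "sm_map X2 f2 \<epsilon> \<epsilon> \<phi> (s_up X1 f1 \<epsilon> v) \<in> Pset X2 f2 \<epsilon> z"
    if v: "v \<in> topspace X1" and M: "\<phi> v \<in> Mminus (sm_top X2 f2 \<epsilon>) (sm_fun f2) \<epsilon> z" for v z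
  proof -
    obtain g where g: "pathin (sm_top X2 f2 \<epsilon>) g" "g 0 = \<phi> v" "g 1 = z"
      "\<And>\<tau>. \<tau> \<in> {0..1} \<Longrightarrow> \<bar>sm_fun f2 (g \<tau>) - (sm_fun f2 (\<phi> v) + \<epsilon>)\<bar> \<le> \<epsilon>"
      using Mminus_band[OF M] by blast
    show ?thesis
      unfolding s_up_def using eps g(4) \<phi>v[OF v]
      by (intro sm_map_sm_pi_in_Pset[OF X2 \<phi> v _ g(1-3)]) auto
  qed
  moreover have "sm_map X2 f2 \<epsilon> \<epsilon> \<phi> (s_down X1 f1 \<epsilon> v) \<in> Pset X2 f2 \<epsilon> z"
    if v: "v \<in> topspace X1" and M: "\<phi> v \<in> Mplus (sm_top X2 f2 \<epsilon>) (sm_fun f2) \<epsilon> z" for v z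
  proof -
    obtain g where g: "pathin (sm_top X2 f2 \<epsilon>) g" "g 0 = \<phi> v" "g 1 = z"
      "\<And>\<tau>. \<tau> \<in> {0..1} \<Longrightarrow> \<bar>sm_fun f2 (g \<tau>) - (sm_fun f2 (\<phi> v) - \<epsilon>)\<bar> \<le> \<epsilon>"
      using Mplus_band[OF M] by blast
    show ?thesis
      unfolding s_down_def using eps g(4) \<phi>v[OF v]
      by (intro sm_map_sm_pi_in_Pset[OF X2 \<phi> v _ g(1-3)]) auto
  qed
  ultimately show ?thesis
    unfolding split_or_max_def join_or_min_def by blast
qed

end
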